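(* Let $\mathbf{A}_C\in\{0,1\}^{U\times N}$, $\mathcal{E}=\{(i,j): [\mathbf{A}_C]_{ij}=1\}$, $\mathbf{B}=\mathbf{A}_C^T\mathbf{A}_C$, and let $\mathbf{u}$ be a unit-norm eigenvector of $\mathbf{B}$ with nonnegative entries associated with $\lambda_{\max}(\mathbf{B})$. For $\mathcal{E}_{\mathcal{R}}\subseteq\mathcal{E}$ define $$f(\mathcal{E}_{\mathcal{R}})=2\sum_{(i,j)\in\mathcal{E}_{\mathcal{R}}}\mathbf{u}^T\mathbf{A}_C^T\mathbf{e}^U_i[\mathbf{u}]_j-\sum_{i=1}^{U}\ \sum_{j:(i,j)\in\mathcal{E}_{\mathcal{R}}}\ \sum_{s:(i,s)\in\mathcal{E}_{\mathcal{R}}}[\mathbf{u}]_j[\mathbf{u}]_s .$$ Then $f$ is a monotonic increasing set function: for all $\mathcal{E}_{\mathcal{R}1}\subseteq\mathcal{E}_{\mathcal{R}2}\subseteq\mathcal{E}$, $f(\mathcal{E}_{\mathcal{R}2})\ge f(\mathcal{E}_{\mathcal{R}1})$.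
   Context: $\mathbf{A}_C$ is the adjacency matrix of a bipartite user–host access graph with $U$ users and $N$ hosts; $\mathcal{E}$ is its edge set. $\mathbf{e}^U_i$ is the $U\times1$ canonical basis vector with $1$ in position $i$; $[\mathbf{u}]_j$ is the $j$-th entry of $\mathbf{u}$. *)

theory Defs
  imports "HOL-Analysis.Analysis"
begin

definition edge_set :: "real ^ 'n ^ 'u \<Rightarrow> ('u \<times> 'n) set" where
  "edge_set A = {(i, j). A $ i $ j = 1}"

definition gram :: "real ^ 'n ^ 'u \<Rightarrow> real ^ 'n ^ 'n" where
  "gram A = transpose A ** A"

definition is_lambda_max :: "real ^ 'n ^ 'n \<Rightarrow> real \<Rightarrow> bool" where
  "is_lambda_max M lam \<longleftrightarrow>
     (\<exists>v. v \<noteq> 0 \<and> M *v v = lam *\<^sub>R v) \<and>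
     (\<forall>mu v. v \<noteq> 0 \<and> M *v v = mu *\<^sub>R v \<longrightarrow> mu \<le> lam)"

definition fset :: "real ^ 'n ^ 'u \<Rightarrow> real ^ 'n \<Rightarrow> ('u \<times> 'n) set \<Rightarrow> real" where
  "fset A u ER =
     2 * (\<Sum>(i, j)\<in>ER. (u \<bullet> (transpose A *v axis i 1)) * u $ j)
     - (\<Sum>i\<in>UNIV. \<Sum>j\<in>{j. (i, j) \<in> ER}. \<Sum>s\<in>{s. (i, s) \<in> ER}. u $ j * u $ s)"

end

theory Submission
  imports Defs
begin

text \<open>Grouping the edges by user i, f is the sum over users of 2 r_i s_i - s_i^2, where
  r_i = u^T A^T e_i is the u-weight of all hosts of i and s_i the u-weight of those hosts
  joined to i in the chosen edge set. For a nonnegative vector u and a nonnegative access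
  matrix, enlarging the edge set increases s_i but never beyond r_i, and t \<mapsto> 2 r t - t^2
  is increasing on [0, r].\<close>

lemma inner_transpose_axis:
  fixes A :: "real ^ 'n ^ 'u" and u :: "real ^ 'n"
  shows "u \<bullet> (transpose A *v axis i 1) = (\<Sum>j\<in>UNIV. u $ j * A $ i $ j)"
proof -
  have "(transpose A *v axis i 1) $ j = A $ i $ j" for j
    by (simp add: matrix_vector_mult_def transpose_def axis_def if_distrib cong: if_cong)
  then show ?thesis by (simp add: inner_vec_def)
qed

lemma fset_eq_sum_users:
  fixes A :: "real ^ 'n ^ 'u" and u :: "real ^ 'n"
  shows "fset A u E = (\<Sum>i\<in>UNIV.
           2 * (u \<bullet> (transpose A *v axis i 1)) * (\<Sum>j\<in>{j. (i, j) \<in> E}. u $ j)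
           - (\<Sum>j\<in>{j. (i, j) \<in> E}. u $ j)\<^sup>2)"
proof -
  have E: "E = Sigma UNIV (\<lambda>i. {j. (i, j) \<in> E})" by auto
  have linear: "(\<Sum>(i, j)\<in>E. (u \<bullet> (transpose A *v axis i 1)) * u $ j)
      = (\<Sum>i\<in>UNIV. \<Sum>j\<in>{j. (i, j) \<in> E}. (u \<bullet> (transpose A *v axis i 1)) * u $ j)"
    by (subst E, subst sum.Sigma) auto
  have quadratic: "(\<Sum>j\<in>{j. (i, j) \<in> E}. \<Sum>s\<in>{s. (i, s) \<in> E}. u $ j * u $ s)
      = (\<Sum>j\<in>{j. (i, j) \<in> E}. u $ j)\<^sup>2" for i
    by (simp add: power2_eq_square sum_product)
  show ?thesis
    unfolding fset_def linear quadratic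
    by (simp add: sum_distrib_left sum_subtractf mult.assoc)
qed

lemma two_mult_minus_square_mono:
  fixes r s t :: real
  assumes "0 \<le> s" "s \<le> t" "t \<le> r"
  shows "2 * r * s - s\<^sup>2 \<le> 2 * r * t - t\<^sup>2"
proof -
  have "(2 * r * t - t\<^sup>2) - (2 * r * s - s\<^sup>2) = (t - s) * (2 * r - s - t)"
    by (simp add: algebra_simps power2_eq_square)
  also have "\<dots> \<ge> 0" using assms by (intro mult_nonneg_nonneg) auto
  finally show ?thesis by simp
qed

lemma sum_edges_le_inner_transpose_axis:
  fixes A :: "real ^ 'n ^ 'u" and u :: "real ^ 'n"
  assumes A_nonneg: "\<forall>i j. A $ i $ j \<in> {0, 1}"
    and u_nonneg: "\<forall>j. u $ j \<ge> 0"
    and E: "E \<subseteq> edge_set A"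
  shows "(\<Sum>j\<in>{j. (i, j) \<in> E}. u $ j) \<le> u \<bullet> (transpose A *v axis i 1)"
proof -
  have "(\<Sum>j\<in>{j. (i, j) \<in> E}. u $ j) = (\<Sum>j\<in>{j. (i, j) \<in> E}. u $ j * A $ i $ j)"
    using E by (intro sum.cong) (auto simp: edge_set_def)
  also have "\<dots> \<le> (\<Sum>j\<in>UNIV. u $ j * A $ i $ j)"
  proof (rule sum_mono2)
    fix j
    have "0 \<le> A $ i $ j" using A_nonneg by (metis empty_iff insert_iff order_refl zero_le_one)
    then show "0 \<le> u $ j * A $ i $ j" using u_nonneg by simp
  qed auto
  finally show ?thesis by (simp only: inner_transpose_axis)
qed

theorem lemma3:
  fixes A :: "real ^ 'n ^ 'u" and u :: "real ^ 'n" and lam :: real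
    and ER1 ER2 :: "('u \<times> 'n) set"
  assumes binary: "\<forall>i j. A $ i $ j \<in> {0, 1}"
    and lmax: "is_lambda_max (gram A) lam"
    and eig: "gram A *v u = lam *\<^sub>R u"
    and unit: "norm u = 1"
    and nonneg: "\<forall>j. u $ j \<ge> 0"
    and sub12: "ER1 \<subseteq> ER2"
    and sub2: "ER2 \<subseteq> edge_set A"
  shows "fset A u ER2 \<ge> fset A u ER1"
  unfolding fset_eq_sum_users
proof (rule sum_mono, rule two_mult_minus_square_mono)
  fix i
  show "0 \<le> (\<Sum>j\<in>{j. (i, j) \<in> ER1}. u $ j)"
    using nonneg by (simp add: sum_nonneg)
  show "(\<Sum>j\<in>{j. (i, j) \<in> ER1}. u $ j) \<le> (\<Sum>j\<in>{j. (i, j) \<in> ER2}. u $ j)"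
    using sub12 nonneg by (intro sum_mono2) auto
  show "(\<Sum>j\<in>{j. (i, j) \<in> ER2}. u $ j) \<le> u \<bullet> (transpose A *v axis i 1)"
    using binary nonneg sub2 by (rule sum_edges_le_inner_transpose_axis)
qed

end
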